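(* For $n=2,3,\dots$ let $\Omega_n=\{1,\dots,n\}$, $\mathcal P_n=\mathcal P(\Omega_n)$ and $g_n$ the Fisher co-metric on $\mathcal P_n$. Let $\{h_n\}_{n\ge2}$ be given, where $h_n$ is a contravariant tensor field of degree 2 on $\mathcal P_n$ mapping each $p\in\mathcal P_n$ continuously to a non-degenerate symmetric bilinear form $h_{n,p}:T_p^*(\mathcal P_n)^2\to\mathbb R$. The following are equivalent: (i) there is $c\in\mathbb R\setminus\{0\}$ with $h_n=c\,g_n$ for all $n$; (ii) for all $m\le n$ and every pair of a Markov embedding $\Phi:\mathcal P_m\to\mathcal P_n$ and a Markov co-embedding $\Psi:\mathcal P_n\to\mathcal P_m$ with $\Psi\circ\Phi=\mathrm{id}_{\mathcal P_m}$, $$h_{m,p}(\alpha_p,\Phi^*_p\beta_{\Phi(p)})=h_{n,\Phi(p)}(\Psi^*_{\Phi(p)}\alpha_p,\beta_{\Phi(p)})\quad\forall p\in\mathcal P_m,\ \alpha_p\in T^*_p(\mathcal P_m),\ \beta_{\Phi(p)}\in T^*_{\Phi(p)}(\mathcal P_n).$$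
   Context: $\mathcal P(\Omega)$ is the manifold of strictly positive probability distributions on a finite set $\Omega$. The Fisher co-metric on $T^*_p(\mathcal P(\Omega))$ is $g_p((d\langle A\rangle)_p,(d\langle B\rangle)_p)=\mathrm{Cov}_p(A,B)$, where $\langle A\rangle(p)=\sum_\omega p(\omega)A(\omega)$. A Markov map $\mathcal P_m\to\mathcal P_n$ is a map $p\mapsto\sum_xW(\cdot|x)p(x)$ for a channel $W$ with $\forall y\,\exists x\,W(y|x)>0$. A Markov map $\Phi$ is a Markov embedding if some Markov map $\Psi$ satisfies $\Psi\circ\Phi=\mathrm{id}$; such $\Psi$ is a Markov co-embedding. $\Phi^*_p$, $\Psi^*_q$ denote transposes of the differentials $(d\Phi)_p$, $(d\Psi)_q$. *)

theory Defs
  imports "HOL-Analysis.Analysis"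
begin

text \<open>Omega_n = {1..n} is represented by the index set {..<n} = {0,...,n-1}.
  Points, tangent_vec vectors and random variables are functions nat => real;
  points and tangent_vec vectors are required to vanish outside {..<n}.\<close>

definition prob_simplex :: "nat \<Rightarrow> (nat \<Rightarrow> real) set" where
  "prob_simplex n = {p. (\<forall>i<n. 0 < p i) \<and> (\<forall>i\<ge>n. p i = 0) \<and> (\<Sum>i<n. p i) = 1}"

definition tangent_vec :: "nat \<Rightarrow> (nat \<Rightarrow> real) \<Rightarrow> bool" where
  "tangent_vec n v \<longleftrightarrow> (\<forall>i\<ge>n. v i = 0) \<and> (\<Sum>i<n. v i) = 0"

text \<open>The covector (d<A>)_p applied to a tangent_vec vector v (independent of p).\<close>
definition dexp :: "nat \<Rightarrow> (nat \<Rightarrow> real) \<Rightarrow> (nat \<Rightarrow> real) \<Rightarrow> real" where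
  "dexp n A v = (\<Sum>i<n. A i * v i)"

definition cov_eq :: "nat \<Rightarrow> (nat \<Rightarrow> real) \<Rightarrow> (nat \<Rightarrow> real) \<Rightarrow> bool" where
  "cov_eq n A B \<longleftrightarrow> (\<forall>v. tangent_vec n v \<longrightarrow> dexp n A v = dexp n B v)"

text \<open>Expectation and Fisher co-metric g_p(d<A>, d<B>) = Cov_p(A,B).\<close>
definition expect :: "nat \<Rightarrow> (nat \<Rightarrow> real) \<Rightarrow> (nat \<Rightarrow> real) \<Rightarrow> real" where
  "expect n p A = (\<Sum>i<n. p i * A i)"

definition fisher :: "nat \<Rightarrow> (nat \<Rightarrow> real) \<Rightarrow> (nat \<Rightarrow> real) \<Rightarrow> (nat \<Rightarrow> real) \<Rightarrow> real" where
  "fisher n p A B = expect n p (\<lambda>i. A i * B i) - expect n p A * expect n p B"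

text \<open>Channels W y x = W(y|x) from Omega_m to Omega_n, with the Markov condition.\<close>
definition markov_channel :: "nat \<Rightarrow> nat \<Rightarrow> (nat \<Rightarrow> nat \<Rightarrow> real) \<Rightarrow> bool" where
  "markov_channel m n W \<longleftrightarrow>
     (\<forall>x<m. \<forall>y<n. 0 \<le> W y x) \<and> (\<forall>x<m. (\<Sum>y<n. W y x) = 1) \<and>
     (\<forall>y<n. \<exists>x<m. 0 < W y x)"

text \<open>The Markov map p |-> sum_x W(.|x) p(x). It is (the restriction of) a linear map,
  so the same formula applied to tangent_vec vectors is its differential.\<close>
definition markov_map :: "nat \<Rightarrow> nat \<Rightarrow> (nat \<Rightarrow> nat \<Rightarrow> real) \<Rightarrow> (nat \<Rightarrow> real) \<Rightarrow> (nat \<Rightarrow> real)" where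
  "markov_map m n W p = (\<lambda>y. if y < n then (\<Sum>x<m. W y x * p x) else 0)"

definition cometric :: "nat \<Rightarrow> ((nat \<Rightarrow> real) \<Rightarrow> (nat \<Rightarrow> real) \<Rightarrow> (nat \<Rightarrow> real) \<Rightarrow> real) \<Rightarrow> bool" where
  "cometric n hn \<longleftrightarrow>
     (\<forall>p\<in>prob_simplex n.
        (\<forall>A A' B B'. cov_eq n A A' \<longrightarrow> cov_eq n B B' \<longrightarrow> hn p A B = hn p A' B') \<and>
        (\<forall>a b A A' B. hn p (\<lambda>i. a * A i + b * A' i) B = a * hn p A B + b * hn p A' B) \<and>
        (\<forall>A B. hn p A B = hn p B A) \<and>
        (\<forall>A. (\<forall>B. hn p A B = 0) \<longrightarrow> cov_eq n A (\<lambda>_. 0))) \<and>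
     (\<forall>A B. continuous_on (prob_simplex n) (\<lambda>p. hn p A B))"

end

theory Submission
  imports Defs
begin

text \<open>A Markov embedding \<open>\<Phi>\<close> with left inverse \<open>\<Psi>\<close> satisfies
  \<open>W(z|x) p(x) = V(x|z) \<Phi>(p)(z)\<close>: the joint law \<open>W(z|x) p(x)\<close> couples \<open>p\<close> and \<open>\<Phi>(p)\<close>
  so that each channel is the conditional law of one coordinate given the other. Both sides
  of the invariance identity for the Fisher co-metric are then the covariance of \<open>A\<close> and \<open>B\<close>
  under this coupling.

  Conversely, embed \<open>P\<^sub>2\<close> into \<open>P\<^sub>n\<close> through \<open>q\<close> by keeping one atom on the point \<open>y\<close>
  and spreading the other over the remaining points in proportion to \<open>q\<close>. Invariance,
  together with the one-dimensionality of the cotangent space of \<open>P\<^sub>2\<close>, gives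
  \<open>h n q (unit_rv y) B = f (q y) * fisher n q (unit_rv y) B\<close> for a function \<open>f\<close> on \<open>]0,1[\<close>.
  Symmetry of \<open>h 3\<close> at \<open>(s, t, 1 - s - t)\<close> forces \<open>f(s) = f(t)\<close>, so \<open>f\<close> is a constant
  \<open>c\<close>; linearity extends the identity to all covectors and non-degeneracy gives \<open>c \<noteq> 0\<close>.\<close>

definition markov_dual :: "nat \<Rightarrow> (nat \<Rightarrow> nat \<Rightarrow> real) \<Rightarrow> (nat \<Rightarrow> real) \<Rightarrow> nat \<Rightarrow> real" where
  "markov_dual n W B = (\<lambda>x. \<Sum>z<n. B z * W z x)"

lemma dexp_markov_map: "dexp n B (markov_map m n W v) = dexp m (markov_dual n W B) v"
  unfolding dexp_def markov_map_def markov_dual_def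
  by (simp add: sum_distrib_left sum_distrib_right mult.assoc sum.swap[of _ "{..<n}"])

definition fisher_sharp :: "nat \<Rightarrow> (nat \<Rightarrow> real) \<Rightarrow> (nat \<Rightarrow> real) \<Rightarrow> nat \<Rightarrow> real" where
  "fisher_sharp n p A = (\<lambda>x. if x < n then p x * (A x - expect n p A) else 0)"

lemma fisher_eq_dexp_sharp: "fisher n p A C = dexp n C (fisher_sharp n p A)"
  unfolding fisher_def dexp_def expect_def fisher_sharp_def
  by (simp add: algebra_simps sum_subtractf sum_distrib_left sum_distrib_right)

lemma tangent_vec_fisher_sharp:
  assumes "(\<Sum>i<n. p i) = 1"
  shows "tangent_vec n (fisher_sharp n p A)"
proof -
  have "(\<Sum>x<n. p x * (A x - expect n p A)) = expect n p A - expect n p A * (\<Sum>x<n. p x)"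
    unfolding expect_def[of n p A]
    by (simp add: right_diff_distrib sum_subtractf sum_distrib_left[symmetric]
        sum_distrib_right[symmetric] mult.commute)
  then show ?thesis
    using assms unfolding tangent_vec_def fisher_sharp_def by simp
qed

lemma fisher_commute: "fisher n p A B = fisher n p B A"
  unfolding fisher_def by (simp add: mult.commute)

lemma coupling_covariance_symmetric:
  fixes K :: "nat \<Rightarrow> nat \<Rightarrow> real"
  assumes marg_q: "\<And>z. z < n \<Longrightarrow> (\<Sum>x<m. K x z) = q z"
    and marg_p: "\<And>x. x < m \<Longrightarrow> (\<Sum>z<n. K x z) = p x"
  shows "(\<Sum>x<m. (\<Sum>z<n. B z * K x z) * (A x - expect m p A))
       = (\<Sum>z<n. (\<Sum>x<m. A x * K x z) * (B z - expect n q B))"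
proof -
  define S where "S = (\<Sum>x<m. \<Sum>z<n. A x * K x z * B z)"
  have EB: "(\<Sum>x<m. \<Sum>z<n. B z * K x z) = expect n q B"
  proof -
    have "(\<Sum>x<m. \<Sum>z<n. B z * K x z) = (\<Sum>z<n. B z * (\<Sum>x<m. K x z))"
      by (subst sum.swap) (simp add: sum_distrib_left)
    then show ?thesis unfolding expect_def using marg_q by (simp add: mult.commute)
  qed
  have EA: "(\<Sum>z<n. \<Sum>x<m. A x * K x z) = expect m p A"
  proof -
    have "(\<Sum>z<n. \<Sum>x<m. A x * K x z) = (\<Sum>x<m. A x * (\<Sum>z<n. K x z))"
      by (subst sum.swap) (simp add: sum_distrib_left)
    then show ?thesis unfolding expect_def using marg_p by (simp add: mult.commute)
  qed
  have "(\<Sum>x<m. (\<Sum>z<n. B z * K x z) * (A x - expect m p A))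
      = S - (\<Sum>x<m. \<Sum>z<n. B z * K x z) * expect m p A"
    unfolding S_def by (simp add: algebra_simps sum_subtractf sum_distrib_right sum_distrib_left)
  also have "\<dots> = S - (\<Sum>z<n. \<Sum>x<m. A x * K x z) * expect n q B"
    unfolding EA EB by simp
  also have "\<dots> = (\<Sum>z<n. (\<Sum>x<m. A x * K x z) * (B z - expect n q B))"
    unfolding S_def
    by (simp add: algebra_simps sum_subtractf sum_distrib_right sum_distrib_left sum.swap[of _ "{..<m}"])
  finally show ?thesis .
qed

lemma markov_map_in_prob_simplex:
  assumes chW: "markov_channel m n W" and p: "p \<in> prob_simplex m"
  shows "markov_map m n W p \<in> prob_simplex n"
proof -
  have pos: "0 < (\<Sum>x<m. W z x * p x)" if z: "z < n" for z
  proof -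
    obtain x where x: "x < m" "0 < W z x" using chW z unfolding markov_channel_def by auto
    have "W z x * p x \<le> (\<Sum>x<m. W z x * p x)"
      by (rule member_le_sum) (use chW p z x in \<open>auto simp: markov_channel_def prob_simplex_def\<close>)
    moreover have "0 < W z x * p x" using x p unfolding prob_simplex_def by auto
    ultimately show ?thesis by linarith
  qed
  have "(\<Sum>z<n. \<Sum>x<m. W z x * p x) = (\<Sum>x<m. p x * (\<Sum>z<n. W z x))"
    by (subst sum.swap) (simp add: sum_distrib_left mult.commute)
  also have "\<dots> = 1" using chW p unfolding markov_channel_def prob_simplex_def by simp
  finally show ?thesis using pos unfolding prob_simplex_def markov_map_def by auto
qed

text \<open>The composite \<open>\<Psi> \<circ> \<Phi>\<close> is linear; evaluating it at the uniform point \<open>u\<close> and at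
  \<open>(u + e\<^sub>k) / 2\<close> isolates the \<open>k\<close>-th column of its matrix.\<close>
lemma markov_left_inverse_entries:
  assumes m: "1 \<le> m" and comp: "\<forall>p\<in>prob_simplex m. markov_map n m V (markov_map m n W p) = p"
    and x: "x < m" and k: "k < m"
  shows "(\<Sum>z<n. V x z * W z k) = (if x = k then 1 else 0)"
proof -
  define M where "M = (\<lambda>x'. \<Sum>z<n. V x z * W z x')"
  have M: "(\<Sum>x'<m. M x' * p x') = p x" if p: "p \<in> prob_simplex m" for p
  proof -
    have "markov_map n m V (markov_map m n W p) x = p x" using comp p by simp
    then have "(\<Sum>z<n. V x z * (\<Sum>x'<m. W z x' * p x')) = p x"
      using x unfolding markov_map_def by simp
    then show ?thesis unfolding M_def
      by (simp add: sum_distrib_left sum_distrib_right mult.assoc sum.swap[of _ "{..<n}"])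
  qed
  define u where "u = (\<lambda>i. if i < m then 1 / real m else (0::real))"
  define uk where "uk = (\<lambda>i. if i < m then (1 / real m + (if i = k then 1 else 0)) / 2 else (0::real))"
  have u: "u \<in> prob_simplex m" using m unfolding u_def prob_simplex_def by auto
  have uk: "uk \<in> prob_simplex m" using m k unfolding uk_def prob_simplex_def
    by (auto simp: sum.distrib sum_divide_distrib[symmetric] add_pos_nonneg)
  have "(\<Sum>x'<m. M x' * uk x') = (\<Sum>x'<m. M x' * u x' / 2 + M x' * (if x' = k then 1/2 else 0))"
    by (rule sum.cong) (auto simp: uk_def u_def field_simps)
  also have "\<dots> = (\<Sum>x'<m. M x' * u x') / 2 + M k / 2"
    using k by (simp only: sum.distrib)
      (simp add: sum_divide_distrib[symmetric] mult.commute[of "M _"] if_distrib sum.delta cong: if_cong)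
  finally have "uk x = u x / 2 + M k / 2" using M[OF uk] M[OF u] by simp
  then show ?thesis using x unfolding uk_def u_def M_def by (auto split: if_splits)
qed

lemma markov_left_inverse_off_diagonal:
  assumes chW: "markov_channel m n W" and chV: "markov_channel n m V"
    and inv: "\<And>x k. x < m \<Longrightarrow> k < m \<Longrightarrow> (\<Sum>z<n. V x z * W z k) = (if x = k then 1 else 0)"
    and x: "x < m" and x': "x' < m" "x' \<noteq> x" and z: "z < n"
  shows "V x z * W z x' = 0"
proof -
  have "(\<Sum>z<n. V x z * W z x') = 0" using inv[OF x x'(1)] x' by simp
  moreover have "\<forall>z\<in>{..<n}. 0 \<le> V x z * W z x'"
    using chW chV x x' unfolding markov_channel_def by auto
  ultimately show ?thesis
    using z sum_nonneg_eq_0_iff[of "{..<n}" "\<lambda>z. V x z * W z x'"] by auto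
qed

lemma markov_left_inverse_on_support:
  assumes chW: "markov_channel m n W" and chV: "markov_channel n m V"
    and inv: "\<And>x k. x < m \<Longrightarrow> k < m \<Longrightarrow> (\<Sum>z<n. V x z * W z k) = (if x = k then 1 else 0)"
    and x: "x < m" and z: "z < n" and pos: "0 < W z x"
  shows "V x z = 1"
proof -
  have V_le_1: "V x z' \<le> 1" if "z' < n" for z'
  proof -
    have "V x z' \<le> (\<Sum>x''<m. V x'' z')"
      by (rule member_le_sum) (use chV that x in \<open>auto simp: markov_channel_def\<close>)
    then show ?thesis using chV that unfolding markov_channel_def by auto
  qed
  have "(\<Sum>z<n. (1 - V x z) * W z x) = (\<Sum>z<n. W z x) - (\<Sum>z<n. V x z * W z x)"
    by (simp add: algebra_simps sum_subtractf)
  also have "\<dots> = 0" using inv[OF x x] chW x unfolding markov_channel_def by simp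
  finally have "(\<Sum>z<n. (1 - V x z) * W z x) = 0" .
  moreover have "\<forall>z\<in>{..<n}. 0 \<le> (1 - V x z) * W z x"
    using chW x V_le_1 unfolding markov_channel_def by auto
  ultimately have "(1 - V x z) * W z x = 0"
    using z sum_nonneg_eq_0_iff[of "{..<n}" "\<lambda>z. (1 - V x z) * W z x"] by auto
  then show ?thesis using pos by simp
qed

lemma markov_embedding_joint_law:
  assumes chW: "markov_channel m n W" and chV: "markov_channel n m V"
    and inv: "\<And>x k. x < m \<Longrightarrow> k < m \<Longrightarrow> (\<Sum>z<n. V x z * W z k) = (if x = k then 1 else 0)"
    and x: "x < m" and z: "z < n"
  shows "W z x * p x = V x z * markov_map m n W p z"
proof -
  have "V x z * markov_map m n W p z = (\<Sum>x'<m. V x z * W z x' * p x')"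
    unfolding markov_map_def using z by (simp add: sum_distrib_left mult.assoc)
  also have "\<dots> = (\<Sum>x'<m. if x' = x then V x z * W z x * p x else 0)"
    by (rule sum.cong) (auto simp: markov_left_inverse_off_diagonal[OF chW chV inv x _ _ z])
  also have "\<dots> = V x z * W z x * p x" using x by simp
  finally have "V x z * markov_map m n W p z = V x z * W z x * p x" .
  moreover have "V x z = 1" if "0 < W z x"
    using markov_left_inverse_on_support[OF chW chV inv x z that] .
  moreover have "W z x = 0" if "\<not> 0 < W z x"
    using that chW x z unfolding markov_channel_def by force
  ultimately show ?thesis by (cases "0 < W z x") auto
qed

lemma fisher_markov_invariant:
  assumes m: "1 \<le> m" and chW: "markov_channel m n W" and chV: "markov_channel n m V"
    and comp: "\<forall>p\<in>prob_simplex m. markov_map n m V (markov_map m n W p) = p"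
    and p: "p \<in> prob_simplex m"
    and C: "\<And>v. tangent_vec m v \<Longrightarrow> dexp m C v = dexp n B (markov_map m n W v)"
    and D: "\<And>u. tangent_vec n u \<Longrightarrow> dexp n D u = dexp m A (markov_map n m V u)"
  shows "fisher m p A C = fisher n (markov_map m n W p) D B"
proof -
  define q where "q = markov_map m n W p"
  define K where "K x z = W z x * p x" for x z
  have "q \<in> prob_simplex n" unfolding q_def by (rule markov_map_in_prob_simplex[OF chW p])
  then have q_sum: "(\<Sum>i<n. q i) = 1" unfolding prob_simplex_def by auto
  have p_sum: "(\<Sum>i<m. p i) = 1" using p unfolding prob_simplex_def by auto
  have inv: "\<And>x k. x < m \<Longrightarrow> k < m \<Longrightarrow> (\<Sum>z<n. V x z * W z k) = (if x = k then 1 else 0)"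
    by (rule markov_left_inverse_entries[OF m comp])
  have marg_q: "(\<Sum>x<m. K x z) = q z" if "z < n" for z
    using that unfolding K_def q_def markov_map_def by simp
  have marg_p: "(\<Sum>z<n. K x z) = p x" if "x < m" for x
    using chW that unfolding K_def markov_channel_def by (simp add: sum_distrib_right[symmetric])
  have K_V: "K x z = V x z * q z" if "x < m" "z < n" for x z
    unfolding K_def q_def by (rule markov_embedding_joint_law[OF chW chV inv that])
  have "fisher m p A C = dexp m C (fisher_sharp m p A)"
    by (rule fisher_eq_dexp_sharp)
  also have "\<dots> = dexp m (markov_dual n W B) (fisher_sharp m p A)"
    by (simp add: C tangent_vec_fisher_sharp[OF p_sum] dexp_markov_map)
  also have "\<dots> = (\<Sum>x<m. (\<Sum>z<n. B z * K x z) * (A x - expect m p A))"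
    unfolding dexp_def fisher_sharp_def markov_dual_def K_def
    by (rule sum.cong) (auto simp: sum_distrib_right mult.assoc)
  also have "\<dots> = (\<Sum>z<n. (\<Sum>x<m. A x * K x z) * (B z - expect n q B))"
    by (rule coupling_covariance_symmetric[OF marg_q marg_p])
  also have "\<dots> = dexp n (markov_dual m V A) (fisher_sharp n q B)"
    unfolding dexp_def fisher_sharp_def markov_dual_def
    by (rule sum.cong) (auto simp: K_V sum_distrib_right mult.assoc)
  also have "\<dots> = dexp n D (fisher_sharp n q B)"
    by (simp add: D tangent_vec_fisher_sharp[OF q_sum] dexp_markov_map)
  also have "\<dots> = fisher n q D B"
    using fisher_eq_dexp_sharp[of n q B D] fisher_commute[of n q B D] by simp
  finally show ?thesis unfolding q_def .
qed

definition unit_rv :: "nat \<Rightarrow> nat \<Rightarrow> real" where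
  "unit_rv y = (\<lambda>i. if i = y then 1 else 0)"

lemma cometric_eq_sum_unit_rv:
  assumes hn: "cometric n hn" and p: "p \<in> prob_simplex n"
  shows "hn p A B = (\<Sum>y<n. A y * hn p (unit_rv y) B)"
proof -
  have lin: "\<And>a b A A' B. hn p (\<lambda>i. a * A i + b * A' i) B = a * hn p A B + b * hn p A' B"
   and wd: "\<And>A A' B B'. cov_eq n A A' \<Longrightarrow> cov_eq n B B' \<Longrightarrow> hn p A B = hn p A' B'"
    using hn p unfolding cometric_def by auto
  have sum: "hn p (\<lambda>i. \<Sum>y\<in>S. A y * unit_rv y i) B = (\<Sum>y\<in>S. A y * hn p (unit_rv y) B)"
    if "finite S" for S
    using that
  proof (induction S rule: finite_induct)
    case empty
    show ?case using lin[of 0 A 0 A B] by simp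
  next
    case (insert y S)
    have "(\<lambda>i. \<Sum>y\<in>insert y S. A y * unit_rv y i)
        = (\<lambda>i. A y * unit_rv y i + 1 * (\<Sum>y\<in>S. A y * unit_rv y i))"
      using insert by auto
    then show ?case using insert lin[of "A y" "unit_rv y" 1 "\<lambda>i. \<Sum>y\<in>S. A y * unit_rv y i" B] by simp
  qed
  have "cov_eq n A (\<lambda>i. \<Sum>y<n. A y * unit_rv y i)"
    unfolding cov_eq_def dexp_def
    by (auto intro!: sum.cong simp: unit_rv_def if_distrib[of "(*) _"] cong: if_cong)
  moreover have "cov_eq n B B" unfolding cov_eq_def by simp
  ultimately show ?thesis using wd sum[of "{..<n}"] by simp
qed

lemma fisher_unit_rv:
  assumes "y < n"
  shows "fisher n q (unit_rv y) B = q y * (B y - expect n q B)"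
  using assms unfolding fisher_def expect_def unit_rv_def
  by (simp add: if_distrib[of "\<lambda>x. x * _"] if_distrib[of "(*) _"] right_diff_distrib cong: if_cong)

lemma fisher_eq_sum_unit_rv: "fisher n q A B = (\<Sum>y<n. A y * fisher n q (unit_rv y) B)"
proof -
  have "(\<Sum>y<n. A y * fisher n q (unit_rv y) B) = (\<Sum>y<n. q y * (A y * B y) - (q y * A y) * expect n q B)"
    by (rule sum.cong) (auto simp: fisher_unit_rv algebra_simps)
  also have "\<dots> = fisher n q A B"
    unfolding fisher_def expect_def by (simp add: sum_subtractf sum_distrib_right)
  finally show ?thesis by simp
qed

lemma cometric_two_points:
  assumes h2: "cometric 2 h2" and p: "p \<in> prob_simplex 2"
  shows "h2 p (unit_rv 0) C = (C 0 - C 1) * h2 p (unit_rv 0) (unit_rv 0)"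
proof -
  have lin: "\<And>a b A A' B. h2 p (\<lambda>i. a * A i + b * A' i) B = a * h2 p A B + b * h2 p A' B"
   and wd: "\<And>A A' B B'. cov_eq 2 A A' \<Longrightarrow> cov_eq 2 B B' \<Longrightarrow> h2 p A B = h2 p A' B'"
   and sym: "\<And>A B. h2 p A B = h2 p B A"
    using h2 p unfolding cometric_def by auto
  have "cov_eq 2 C (\<lambda>i. (C 0 - C 1) * unit_rv 0 i + 0 * unit_rv 0 i)"
    unfolding cov_eq_def dexp_def tangent_vec_def
  proof (intro allI impI)
    fix v :: "nat \<Rightarrow> real" assume "(\<forall>i\<ge>2. v i = 0) \<and> (\<Sum>i<2. v i) = 0"
    then have "v 1 = - v 0" by (simp add: numeral_2_eq_2)
    then show "(\<Sum>i<2. C i * v i) = (\<Sum>i<2. ((C 0 - C 1) * unit_rv 0 i + 0 * unit_rv 0 i) * v i)"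
      by (simp add: numeral_2_eq_2 unit_rv_def algebra_simps)
  qed
  moreover have "cov_eq 2 B B" for B unfolding cov_eq_def by simp
  ultimately have "h2 p C (unit_rv 0)
      = h2 p (\<lambda>i. (C 0 - C 1) * unit_rv 0 i + 0 * unit_rv 0 i) (unit_rv 0)"
    using wd by blast
  also have "\<dots> = (C 0 - C 1) * h2 p (unit_rv 0) (unit_rv 0) + 0 * h2 p (unit_rv 0) (unit_rv 0)"
    by (rule lin)
  finally show ?thesis using sym by simp
qed

lemma sum_unit_rv: "y < n \<Longrightarrow> (\<Sum>i<n. unit_rv y i) = 1"
  unfolding unit_rv_def by simp

lemma cometric_nonzero:
  assumes n: "2 \<le> n" and hn: "cometric n hn" and p: "p \<in> prob_simplex n"
  shows "\<exists>B. hn p (unit_rv 0) B \<noteq> 0"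
proof (rule ccontr)
  assume "\<not> (\<exists>B. hn p (unit_rv 0) B \<noteq> 0)"
  then have zero: "cov_eq n (unit_rv 0) (\<lambda>_. 0)" using hn p unfolding cometric_def by auto
  define v where "v i = unit_rv 0 i - unit_rv 1 i" for i
  have "tangent_vec n v"
    using n unfolding tangent_vec_def v_def
    by (auto simp: sum_subtractf sum_unit_rv) (auto simp: unit_rv_def)
  then have "dexp n (unit_rv 0) v = 0" using zero unfolding cov_eq_def dexp_def by simp
  moreover have "dexp n (unit_rv 0) v = 1"
  proof -
    have v: "(\<lambda>i. unit_rv 0 i * v i) = unit_rv 0" by (auto simp: v_def unit_rv_def)
    show ?thesis unfolding dexp_def v using n by (simp add: sum_unit_rv)
  qed
  ultimately show False by simp
qed

definition markov_invariant ::
    "(nat \<Rightarrow> (nat \<Rightarrow> real) \<Rightarrow> (nat \<Rightarrow> real) \<Rightarrow> (nat \<Rightarrow> real) \<Rightarrow> real) \<Rightarrow> bool" where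
  "markov_invariant h \<longleftrightarrow> (\<forall>m n W V. 2 \<le> m \<longrightarrow> m \<le> n \<longrightarrow>
     markov_channel m n W \<longrightarrow> markov_channel n m V \<longrightarrow>
     (\<forall>p\<in>prob_simplex m. markov_map n m V (markov_map m n W p) = p) \<longrightarrow>
     (\<forall>p\<in>prob_simplex m. \<forall>A B C D.
        (\<forall>v. tangent_vec m v \<longrightarrow> dexp m C v = dexp n B (markov_map m n W v)) \<longrightarrow>
        (\<forall>u. tangent_vec n u \<longrightarrow> dexp n D u = dexp m A (markov_map n m V u)) \<longrightarrow>
        h m p A C = h n (markov_map m n W p) D B))"

lemma fisher_multiple_markov_invariant:
  assumes "\<forall>n\<ge>2. \<forall>p\<in>prob_simplex n. \<forall>A B. h n p A B = c * fisher n p A B"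
  shows "markov_invariant h"
  unfolding markov_invariant_def
proof (intro allI impI ballI)
  fix m n W V p A B C D
  assume m: "2 \<le> m" and "m \<le> n" and chW: "markov_channel m n W" and chV: "markov_channel n m V"
    and comp: "\<forall>p\<in>prob_simplex m. markov_map n m V (markov_map m n W p) = p"
    and p: "p \<in> prob_simplex m"
    and "\<forall>v. tangent_vec m v \<longrightarrow> dexp m C v = dexp n B (markov_map m n W v)"
    and "\<forall>u. tangent_vec n u \<longrightarrow> dexp n D u = dexp m A (markov_map n m V u)"
  then have "fisher m p A C = fisher n (markov_map m n W p) D B"
    by (intro fisher_markov_invariant[OF _ chW chV comp p]) auto
  then show "h m p A C = h n (markov_map m n W p) D B"
    using assms m \<open>m \<le> n\<close> p markov_map_in_prob_simplex[OF chW p] by simp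
qed

lemma sum_if_neq_eq_diff:
  fixes f :: "nat \<Rightarrow> real"
  assumes "y < n"
  shows "(\<Sum>z<n. if z = y then 0 else f z) = (\<Sum>z<n. f z) - f y"
  using assms by (simp add: sum.If_cases Diff_eq[symmetric] sum_diff1)

lemma prob_simplex_coord_less_1:
  assumes n: "2 \<le> n" and q: "q \<in> prob_simplex n" and y: "y < n"
  shows "q y < 1"
proof -
  define y' where "y' = (if y = 0 then 1 else 0::nat)"
  have y': "y' < n" "y' \<noteq> y" using n unfolding y'_def by auto
  have "(if y' = y then 0 else q y') \<le> (\<Sum>z<n. if z = y then 0 else q z)"
    by (rule member_le_sum) (use q y' in \<open>auto simp: prob_simplex_def\<close>)
  moreover have "0 < q y'" using q y' unfolding prob_simplex_def by auto
  moreover have "(\<Sum>z<n. if z = y then 0 else q z) = 1 - q y"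
    using q y by (simp add: sum_if_neq_eq_diff prob_simplex_def)
  ultimately show ?thesis using y' by simp
qed

definition binary_point :: "real \<Rightarrow> nat \<Rightarrow> real" where
  "binary_point t = (\<lambda>i. if i = 0 then t else if i = 1 then 1 - t else 0)"

definition split_channel :: "(nat \<Rightarrow> real) \<Rightarrow> nat \<Rightarrow> nat \<Rightarrow> nat \<Rightarrow> real" where
  "split_channel q y z x =
     (if x = 0 then (if z = y then 1 else 0)
      else if x = 1 then (if z = y then 0 else q z / (1 - q y)) else 0)"

definition lump_channel :: "nat \<Rightarrow> nat \<Rightarrow> nat \<Rightarrow> real" where
  "lump_channel y x z =
     (if x = 0 then (if z = y then 1 else 0) else if x = 1 then (if z = y then 0 else 1) else 0)"

lemma markov_channel_split_channel:
  assumes n: "2 \<le> n" and q: "q \<in> prob_simplex n" and y: "y < n"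
  shows "markov_channel 2 n (split_channel q y)"
proof -
  have q_pos: "\<And>z. z < n \<Longrightarrow> 0 < q z" using q unfolding prob_simplex_def by auto
  have q_sum: "(\<Sum>z<n. q z) = 1" using q unfolding prob_simplex_def by auto
  have q_y: "q y < 1" by (rule prob_simplex_coord_less_1[OF n q y])
  have "(\<Sum>z<n. split_channel q y z 1) = (\<Sum>z<n. (if z = y then 0 else q z) / (1 - q y))"
    unfolding split_channel_def by (intro sum.cong) auto
  also have "\<dots> = 1"
    using y q_y by (simp add: sum_divide_distrib[symmetric] sum_if_neq_eq_diff q_sum)
  finally have "(\<Sum>z<n. split_channel q y z 1) = 1" .
  moreover have "(\<Sum>z<n. split_channel q y z 0) = 1" using y unfolding split_channel_def by simp
  moreover have "\<exists>x<2. 0 < split_channel q y z x" if "z < n" for z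
    using q_pos[OF that] q_y unfolding split_channel_def
    by (intro exI[of _ "if z = y then 0 else 1"]) auto
  moreover have "0 \<le> split_channel q y z x" if "z < n" for x z
    using q_pos[OF that] q_y unfolding split_channel_def by (auto intro: less_imp_le)
  ultimately show ?thesis
    unfolding markov_channel_def by (auto simp: less_2_cases_iff)
qed

lemma markov_channel_lump_channel:
  assumes n: "2 \<le> n" and y: "y < n"
  shows "markov_channel n 2 (lump_channel y)"
proof -
  define y' where "y' = (if y = 0 then 1 else 0::nat)"
  have y': "y' < n" "y' \<noteq> y" using n unfolding y'_def by auto
  have "\<exists>z<n. 0 < lump_channel y x z" if "x < 2" for x
    using that y y' unfolding lump_channel_def
    by (intro exI[of _ "if x = 0 then y else y'"]) (auto simp: less_2_cases_iff)
  then show ?thesis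
    unfolding markov_channel_def by (auto simp: lump_channel_def numeral_2_eq_2)
qed

lemma markov_map_split_channel:
  "markov_map 2 n (split_channel q y) p z =
     (if z < n then (if z = y then p 0 else q z / (1 - q y) * p 1) else 0)"
  unfolding markov_map_def split_channel_def by (simp add: numeral_2_eq_2)

lemma lump_split_channel:
  assumes n: "2 \<le> n" and q: "q \<in> prob_simplex n" and y: "y < n" and p: "p \<in> prob_simplex 2"
  shows "markov_map n 2 (lump_channel y) (markov_map 2 n (split_channel q y) p) = p"
proof
  fix i
  have q_y: "q y < 1" by (rule prob_simplex_coord_less_1[OF n q y])
  have q_sum: "(\<Sum>z<n. q z) = 1" using q unfolding prob_simplex_def by auto
  have "(\<Sum>z<n. lump_channel y 0 z * markov_map 2 n (split_channel q y) p z) = p 0"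
    using y unfolding markov_map_split_channel lump_channel_def
    by (simp add: if_distrib[of "(*) _"] cong: if_cong)
  moreover have "(\<Sum>z<n. lump_channel y 1 z * markov_map 2 n (split_channel q y) p z)
      = (\<Sum>z<n. (if z = y then 0 else q z) * (p 1 / (1 - q y)))"
    unfolding markov_map_split_channel lump_channel_def by (intro sum.cong) auto
  moreover have "\<dots> = p 1"
    using y q_y by (simp only: sum_distrib_right[symmetric] sum_if_neq_eq_diff q_sum) simp
  moreover have "p i = 0" if "\<not> i < 2" using p that unfolding prob_simplex_def by auto
  ultimately show "markov_map n 2 (lump_channel y) (markov_map 2 n (split_channel q y) p) i = p i"
    unfolding markov_map_def by (auto simp: less_2_cases_iff)
qed

lemma split_channel_binary_point:
  assumes n: "2 \<le> n" and q: "q \<in> prob_simplex n" and y: "y < n"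
  shows "markov_map 2 n (split_channel q y) (binary_point (q y)) = q"
proof
  fix z
  show "markov_map 2 n (split_channel q y) (binary_point (q y)) z = q z"
    using q prob_simplex_coord_less_1[OF n q y]
    unfolding markov_map_split_channel binary_point_def prob_simplex_def by auto
qed

lemma expect_unit_rv: "y < n \<Longrightarrow> expect n q (unit_rv y) = q y"
  unfolding expect_def unit_rv_def by (simp add: if_distrib[of "(*) _"] cong: if_cong)

text \<open>Since \<open>fisher 2 (binary_point t) (unit_rv 0) (unit_rv 0) = t * (1 - t)\<close>, this is the
  ratio \<open>h / fisher\<close> at \<open>binary_point t\<close>.\<close>
definition fisher_ratio ::
    "(nat \<Rightarrow> (nat \<Rightarrow> real) \<Rightarrow> (nat \<Rightarrow> real) \<Rightarrow> (nat \<Rightarrow> real) \<Rightarrow> real) \<Rightarrow> real \<Rightarrow> real" where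
  "fisher_ratio h t = h 2 (binary_point t) (unit_rv 0) (unit_rv 0) / (t * (1 - t))"

lemma markov_invariant_unit_rv:
  assumes inv: "markov_invariant h" and h2: "cometric 2 (h 2)"
    and n: "2 \<le> n" and q: "q \<in> prob_simplex n" and y: "y < n"
  shows "h n q (unit_rv y) B = fisher_ratio h (q y) * fisher n q (unit_rv y) B"
proof -
  define t where "t = q y"
  define W where "W = split_channel q y"
  define C where "C = markov_dual n W B"
  have t: "0 < t" "t < 1"
    using q y prob_simplex_coord_less_1[OF n q y] unfolding t_def prob_simplex_def by auto
  have bp: "binary_point t \<in> prob_simplex 2"
    using t unfolding binary_point_def prob_simplex_def by (auto simp: numeral_2_eq_2)
  have "markov_dual 2 (lump_channel y) (unit_rv 0) = unit_rv y"
    unfolding markov_dual_def unit_rv_def lump_channel_def by (auto simp: numeral_2_eq_2)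
  then have "h n q (unit_rv y) B = h 2 (binary_point t) (unit_rv 0) C"
    using inv[unfolded markov_invariant_def, rule_format, OF _ n
        markov_channel_split_channel[OF n q y] markov_channel_lump_channel[OF n y] _ bp,
        where A = "unit_rv 0" and B = B and C = C and D = "unit_rv y"]
    by (simp add: C_def W_def t_def dexp_markov_map lump_split_channel[OF n q y]
        split_channel_binary_point[OF n q y])
  also have "\<dots> = (C 0 - C 1) * h 2 (binary_point t) (unit_rv 0) (unit_rv 0)"
    by (rule cometric_two_points[OF h2 bp])
  also have "C 0 - C 1 = (B y - expect n q B) / (1 - t)"
  proof -
    have "C 1 = (\<Sum>z<n. if z = y then 0 else q z * B z) / (1 - t)"
      unfolding C_def W_def markov_dual_def split_channel_def t_def sum_divide_distrib
      by (intro sum.cong) auto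
    moreover have "C 0 = B y"
      using y unfolding C_def W_def markov_dual_def split_channel_def
      by (simp add: if_distrib[of "(*) _"] cong: if_cong)
    ultimately show ?thesis
      using y t unfolding expect_def t_def by (simp add: sum_if_neq_eq_diff field_simps)
  qed
  also have "(B y - expect n q B) / (1 - t) * h 2 (binary_point t) (unit_rv 0) (unit_rv 0)
      = fisher_ratio h t * fisher n q (unit_rv y) B"
    unfolding fisher_unit_rv[OF y] fisher_ratio_def t_def[symmetric] using t by (simp add: field_simps)
  finally show ?thesis unfolding t_def .
qed

lemma fisher_ratio_symmetric:
  assumes inv: "markov_invariant h" and h2: "cometric 2 (h 2)" and h3: "cometric 3 (h 3)"
    and s: "0 < s" and t: "0 < t" and st: "s + t < 1"
  shows "fisher_ratio h s = fisher_ratio h t"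
proof -
  define q where "q = (\<lambda>i::nat. if i = 0 then s else if i = 1 then t else if i = 2 then 1 - s - t else 0)"
  have q: "q \<in> prob_simplex 3"
    using s t st unfolding q_def prob_simplex_def by (auto simp: numeral_3_eq_3)
  have "fisher 3 q (unit_rv 0) (unit_rv 1) = - (s * t)"
    using fisher_unit_rv[of 0 3 q "unit_rv 1"] expect_unit_rv[of 1 3 q] by (simp add: q_def unit_rv_def)
  then have "h 3 q (unit_rv 0) (unit_rv 1) = fisher_ratio h s * (- (s * t))"
    using markov_invariant_unit_rv[OF inv h2 _ q, of 0 "unit_rv 1"] by (simp add: q_def)
  moreover have "fisher 3 q (unit_rv 1) (unit_rv 0) = - (s * t)"
    using fisher_unit_rv[of 1 3 q "unit_rv 0"] expect_unit_rv[of 0 3 q] by (simp add: q_def unit_rv_def)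
  then have "h 3 q (unit_rv 1) (unit_rv 0) = fisher_ratio h t * (- (s * t))"
    using markov_invariant_unit_rv[OF inv h2 _ q, of 1 "unit_rv 0"] by (simp add: q_def)
  moreover have "h 3 q (unit_rv 0) (unit_rv 1) = h 3 q (unit_rv 1) (unit_rv 0)"
    using h3 q unfolding cometric_def by auto
  ultimately show ?thesis using s t by simp
qed

lemma fisher_ratio_constant:
  assumes inv: "markov_invariant h" and h2: "cometric 2 (h 2)" and h3: "cometric 3 (h 3)"
    and t: "0 < t" "t < 1"
  shows "fisher_ratio h t = fisher_ratio h (1/2)"
proof -
  define r where "r = min (1 - t) (1/2) / 2"
  have "fisher_ratio h t = fisher_ratio h r"
    using t by (intro fisher_ratio_symmetric[OF inv h2 h3]) (auto simp: r_def min_def field_simps)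
  also have "\<dots> = fisher_ratio h (1/2)"
    using t by (intro fisher_ratio_symmetric[OF inv h2 h3]) (auto simp: r_def min_def field_simps)
  finally show ?thesis .
qed

lemma markov_invariant_fisher_multiple:
  assumes hc: "\<And>n. 2 \<le> n \<Longrightarrow> cometric n (h n)" and inv: "markov_invariant h"
  shows "\<exists>c. c \<noteq> 0 \<and> (\<forall>n\<ge>2. \<forall>p\<in>prob_simplex n. \<forall>A B. h n p A B = c * fisher n p A B)"
proof -
  define c where "c = fisher_ratio h (1/2)"
  have h2: "cometric 2 (h 2)" and h3: "cometric 3 (h 3)" using hc by auto
  have multiple: "h n p A B = c * fisher n p A B" if n: "2 \<le> n" and p: "p \<in> prob_simplex n" for n p A B
  proof -
    have "h n p A B = (\<Sum>y<n. A y * h n p (unit_rv y) B)"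
      by (rule cometric_eq_sum_unit_rv[OF hc[OF n] p])
    also have "\<dots> = (\<Sum>y<n. c * (A y * fisher n p (unit_rv y) B))"
    proof (rule sum.cong)
      fix y assume "y \<in> {..<n}"
      then have y: "y < n" by simp
      have "fisher_ratio h (p y) = c"
        unfolding c_def using p y prob_simplex_coord_less_1[OF n p y]
        by (intro fisher_ratio_constant[OF inv h2 h3]) (auto simp: prob_simplex_def)
      then show "A y * h n p (unit_rv y) B = c * (A y * fisher n p (unit_rv y) B)"
        unfolding markov_invariant_unit_rv[OF inv h2 n p y] by simp
    qed simp
    also have "\<dots> = c * fisher n p A B"
      by (simp add: fisher_eq_sum_unit_rv[of n p A B] sum_distrib_left)
    finally show ?thesis .
  qed
  have bp: "binary_point (1/2) \<in> prob_simplex 2"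
    unfolding binary_point_def prob_simplex_def by (auto simp: numeral_2_eq_2)
  obtain B where "h 2 (binary_point (1/2)) (unit_rv 0) B \<noteq> 0"
    using cometric_nonzero[OF _ h2 bp] by auto
  then have "c \<noteq> 0" using multiple[OF _ bp] by auto
  then show ?thesis using multiple by blast
qed

theorem mainTheorem13:
  fixes h :: "nat \<Rightarrow> (nat \<Rightarrow> real) \<Rightarrow> (nat \<Rightarrow> real) \<Rightarrow> (nat \<Rightarrow> real) \<Rightarrow> real"
  assumes h_cometric: "\<And>n. 2 \<le> n \<Longrightarrow> cometric n (h n)"
  shows "(\<exists>c. c \<noteq> 0 \<and>
            (\<forall>n\<ge>2. \<forall>p\<in>prob_simplex n. \<forall>A B. h n p A B = c * fisher n p A B))
     \<longleftrightarrow>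
         (\<forall>m n W V. 2 \<le> m \<longrightarrow> m \<le> n \<longrightarrow>
            markov_channel m n W \<longrightarrow> markov_channel n m V \<longrightarrow>
            (\<forall>p\<in>prob_simplex m. markov_map n m V (markov_map m n W p) = p) \<longrightarrow>
            (\<forall>p\<in>prob_simplex m. \<forall>A B C D.
               (\<forall>v. tangent_vec m v \<longrightarrow> dexp m C v = dexp n B (markov_map m n W v)) \<longrightarrow>
               (\<forall>u. tangent_vec n u \<longrightarrow> dexp n D u = dexp m A (markov_map n m V u)) \<longrightarrow>
               h m p A C = h n (markov_map m n W p) D B))"
proof -
  have "(\<exists>c. c \<noteq> 0 \<and> (\<forall>n\<ge>2. \<forall>p\<in>prob_simplex n. \<forall>A B. h n p A B = c * fisher n p A B))
      \<longleftrightarrow> markov_invariant h"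
    using fisher_multiple_markov_invariant markov_invariant_fisher_multiple[OF h_cometric] by blast
  then show ?thesis unfolding markov_invariant_def .
qed

end
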